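(* Let $\alpha$ be an action of a countable group $G$ on $L_1[0,1]$ by lattice (positive) linear isometries, and consider the induced action of $G$ on $[0,1]$ by measure-class preserving measurable bijections (so that $\alpha(g)f(x)=\frac{d g_*\lambda}{d\lambda}(x) f(g^{-1}x)$). Suppose this action on $[0,1]$ admits a measurable fundamental domain, i.e. a measurable set $A\subseteq[0,1]$ such that $\lambda(gA\cap hA)=0$ for $g\neq h\in G$ and $\lambda\big([0,1]\triangle\bigcup_{g\in G} gA\big)=0$, where $\lambda$ is Lebesgue measure. Then there is an equivalent strictly convex $G$-invariant norm on $L_1[0,1]$.
   Context: A norm $\|\cdot\|'$ is $G$-invariant if $\|\alpha(g)f\|'=\|f\|'$ for all $g\in G$, $f\in L_1[0,1]$; it is strictly convex if for every $x\neq y$ with $\|x\|'=\|y\|'$ one has $\|\frac{x+y}{2}\|'<\|x\|'$. *)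

theory Defs
  imports "HOL-Analysis.Analysis" "HOL-Algebra.Group"
begin

definition lam01 :: "real measure" where
  "lam01 = lebesgue_on {0..1}"

definition L1norm :: "(real \<Rightarrow> real) \<Rightarrow> real" where
  "L1norm f = (LINT x|lam01. \<bar>f x\<bar>)"

definition induced_op ::
  "('g, 'b) monoid_scheme \<Rightarrow> ('g \<Rightarrow> real \<Rightarrow> real) \<Rightarrow> 'g \<Rightarrow> (real \<Rightarrow> real) \<Rightarrow> real \<Rightarrow> real" where
  "induced_op G T g f x =
     enn2real (RN_deriv lam01 (distr lam01 lam01 (T g)) x) * f (T (inv\<^bsub>G\<^esub> g) x)"

definition mcp_action :: "('g, 'b) monoid_scheme \<Rightarrow> ('g \<Rightarrow> real \<Rightarrow> real) \<Rightarrow> bool" where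
  "mcp_action G T \<longleftrightarrow>
     (\<forall>g\<in>carrier G. bij_betw (T g) {0..1} {0..1} \<and> T g \<in> lam01 \<rightarrow>\<^sub>M lam01 \<and>
        (\<forall>N\<in>sets lam01. emeasure lam01 N = 0 \<longleftrightarrow> emeasure lam01 (T g ` N) = 0)) \<and>
     (\<forall>x\<in>{0..1}. T \<one>\<^bsub>G\<^esub> x = x) \<and>
     (\<forall>g\<in>carrier G. \<forall>h\<in>carrier G. \<forall>x\<in>{0..1}. T (g \<otimes>\<^bsub>G\<^esub> h) x = T g (T h x))"

definition fundamental_domain ::
  "('g, 'b) monoid_scheme \<Rightarrow> ('g \<Rightarrow> real \<Rightarrow> real) \<Rightarrow> real set \<Rightarrow> bool" where
  "fundamental_domain G T A \<longleftrightarrow>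
     A \<in> sets lam01 \<and>
     (\<forall>g\<in>carrier G. \<forall>h\<in>carrier G. g \<noteq> h \<longrightarrow> emeasure lam01 (T g ` A \<inter> T h ` A) = 0) \<and>
     emeasure lam01 (({0..1} - (\<Union>g\<in>carrier G. T g ` A)) \<union> ((\<Union>g\<in>carrier G. T g ` A) - {0..1})) = 0"

end

theory Submission
  imports Defs
begin

(* For k in G and rational q let phi(k,q) f be the integral of f over T_k^{-1}(A \<inter> (-\<infinity>, q]).
   The translates of the fundamental domain A are almost disjoint, so the integrals of |f|
   over the sets T_k^{-1}A add up to at most the L1 norm of f; weighting an enumeration of the
   rationals geometrically, the squares of the phi(k,q) f sum to some Q(f) <= 2 L1(f)^2.
   Take the norm sqrt (L1(f)^2 + Q(f)).  Q is a Hilbertian quadratic form, so by the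
   parallelogram law this norm is strictly convex once Q separates points, which it does:
   the translates of A cover [0,1], and an integrable function with vanishing integrals over
   all half-lines with rational endpoint is zero.  It is G-invariant because alpha(h) is an
   L1 isometry with phi(k,q) (alpha(h) f) = phi(k h, q) f. *)

lemma space_lam01 [simp]: "space lam01 = {0..1}"
  by (simp add: lam01_def)

lemma sets_lam01: "B \<in> sets lam01 \<longleftrightarrow> B \<subseteq> {0..1} \<and> B \<in> sets lebesgue"
  by (auto simp: lam01_def sets_restrict_space)

interpretation lam01: finite_measure lam01
  by (rule finite_measureI) (simp add: lam01_def emeasure_restrict_space)

lemma borel_eq_atMost_Rats: "borel = sigma UNIV (atMost ` (\<rat> :: real set))"
proof (rule borel_eq_sigmaI1[OF borel_eq_atMost])
  fix X :: "real set" assume "X \<in> range atMost"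
  then obtain x where X: "X = {..x}" by auto
  have "X = (\<Inter>q\<in>\<rat> \<inter> {x<..}. {..q})"
    unfolding X
  proof (intro equalityI subsetI)
    fix y assume y: "y \<in> (\<Inter>q\<in>\<rat> \<inter> {x<..}. {..q})"
    show "y \<in> {..x}"
    proof (rule ccontr)
      assume "y \<notin> {..x}"
      then obtain q where q: "q \<in> \<rat>" "x < q" "q < y" using Rats_dense_in_real[of x y] by auto
      then have "y \<in> {..q}" using y by blast
      with q show False by simp
    qed
  qed auto
  also have "\<dots> \<in> sets (sigma UNIV (atMost ` \<rat>))"
    by (intro sets.countable_INT'') (auto intro: countable_Int1 countable_rat sigma_sets_top)
  finally show "X \<in> sets (sigma UNIV (atMost ` \<rat>))" .
qed auto

lemma AE_zero_if_integral_atMost_Rats_lborel: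
  fixes v :: "real \<Rightarrow> real"
  assumes v: "integrable lborel v"
    and zero: "\<And>q. q \<in> \<rat> \<Longrightarrow> (LINT x|lborel. indicator {..q} x * v x) = 0"
  shows "AE x in lborel. v x = 0"
proof -
  \<comment> \<open>The positive and negative parts of v are densities of finite measures that agree on
    the Int-stable generator of the Borel sets formed by the half-lines with rational endpoint.\<close>
  define part where "part s = density lborel (\<lambda>x. ennreal (max 0 (s * v x)))" for s :: real
  have part_int: "integrable lborel (\<lambda>x. indicator B x * max 0 (s * v x))"
    if "B \<in> sets borel" for B s
    using v that integrable_mult_indicator[of B lborel "\<lambda>x. max 0 (s * v x)"] by auto
  have emeasure_part: "emeasure (part s) B = ennreal (LINT x|lborel. indicator B x * max 0 (s * v x))"
    if B: "B \<in> sets borel" for B s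
  proof -
    have "emeasure (part s) B = (\<integral>\<^sup>+x. ennreal (indicator B x * max 0 (s * v x)) \<partial>lborel)"
      unfolding part_def using B v
      by (subst emeasure_density) (auto intro!: nn_integral_cong split: split_indicator)
    also have "\<dots> = ennreal (LINT x|lborel. indicator B x * max 0 (s * v x))"
      using B part_int by (intro nn_integral_eq_integral) auto
    finally show ?thesis .
  qed
  have "part 1 = part (-1)"
  proof (rule measure_eqI_generator_eq_countable[where \<Omega>=UNIV and E="atMost ` \<rat>" and A="atMost ` \<rat>"])
    fix X assume "X \<in> atMost ` (\<rat> :: real set)"
    then obtain q where q: "q \<in> \<rat>" "X = {..q}" by auto
    have "integrable lborel (\<lambda>x. indicator X x * max 0 (v x))"
      "integrable lborel (\<lambda>x. indicator X x * max 0 (- v x))"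
      using part_int[of X 1] part_int[of X "-1"] q by simp_all
    then have "(LINT x|lborel. indicator X x * v x)
        = (LINT x|lborel. indicator X x * max 0 (v x)) - (LINT x|lborel. indicator X x * max 0 (- v x))"
      by (subst Bochner_Integration.integral_diff[symmetric])
        (auto simp del: Bochner_Integration.integral_diff intro!: Bochner_Integration.integral_cong simp: max_def)
    then show "emeasure (part 1) X = emeasure (part (-1)) X"
      using zero[OF q(1)] q by (simp add: emeasure_part)
  next
    have "sets (part s) = sigma_sets UNIV (atMost ` \<rat>)" for s
      unfolding part_def using arg_cong[OF borel_eq_atMost_Rats, of sets] by simp
    then show "sets (part 1) = sigma_sets UNIV (atMost ` \<rat>)"
      "sets (part (-1)) = sigma_sets UNIV (atMost ` \<rat>)" by blast+
    show "emeasure (part 1) X \<noteq> \<infinity>" if "X \<in> atMost ` \<rat>" for X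
      using that by (auto simp: emeasure_part)
  qed (auto simp: Int_stable_def image_iff min_def countable_rat intro: Rats_no_top_le)
  then have "AE x in lborel. ennreal (max 0 (v x)) = ennreal (max 0 (- v x))"
    unfolding part_def using v
    by (subst (asm) finite_density_unique) (auto simp: nn_integral_eq_integral)
  then show ?thesis
    by eventually_elim (auto simp: max_def split: if_splits)
qed

lemma AE_zero_if_integral_atMost_Rats:
  fixes u :: "real \<Rightarrow> real"
  assumes S: "S \<in> sets lebesgue" and u: "integrable (lebesgue_on S) u"
    and zero: "\<And>q. q \<in> \<rat> \<Longrightarrow> (LINT x|lebesgue_on S. indicator {..q} x * u x) = 0"
  shows "AE x in lebesgue_on S. u x = 0"
proof -
  have S': "S \<inter> space lebesgue \<in> sets lebesgue" using S by simp
  define v where "v x = indicator S x * u x" for x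
  have v: "integrable lebesgue v"
    using u unfolding v_def integrable_restrict_space[OF S'] by simp
  obtain w where w: "w \<in> borel_measurable lborel" and "AE x in lborel. v x = w x"
    using completion_ex_borel_measurable_real[of v lborel] v by auto
  then have vw: "AE x in lebesgue. v x = w x" by (simp add: AE_completion_iff)
  have "integrable lebesgue w"
    using integrable_cong_AE_imp[OF v measurable_completion[OF w] vw] .
  then have w_int: "integrable lborel w" using w by (simp add: integrable_completion)
  have "AE x in lborel. w x = 0"
  proof (rule AE_zero_if_integral_atMost_Rats_lborel[OF w_int])
    fix q :: real assume q: "q \<in> \<rat>"
    have "(LINT x|lborel. indicator {..q} x * w x) = (LINT x|lebesgue. indicator {..q} x * w x)"
      using w by (simp add: integral_completion)
    also have "\<dots> = (LINT x|lebesgue. indicator {..q} x * v x)"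
    proof (rule integral_cong_AE)
      have "w \<in> borel_measurable lebesgue" using w by (rule measurable_completion)
      moreover have "{..q} \<in> sets lebesgue" by (intro sets_completionI_sets) simp
      ultimately show "(\<lambda>x. indicator {..q} x * w x) \<in> borel_measurable lebesgue"
        by (intro borel_measurable_times borel_measurable_indicator)
      show "(\<lambda>x. indicator {..q} x * v x) \<in> borel_measurable lebesgue"
        using v \<open>{..q} \<in> sets lebesgue\<close> by (intro borel_measurable_times borel_measurable_indicator) auto
      show "AE x in lebesgue. indicator {..q} x * w x = indicator {..q} x * v x"
        using vw by eventually_elim simp
    qed
    also have "\<dots> = (LINT x|lebesgue_on S. indicator {..q} x * u x)"
      unfolding integral_restrict_space[OF S'] v_def by (simp add: mult_ac)
    finally show "(LINT x|lborel. indicator {..q} x * w x) = 0" using zero[OF q] by simp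
  qed
  then have "AE x in lebesgue. w x = 0" by (rule AE_completion)
  with vw have "AE x in lebesgue. v x = 0" by eventually_elim simp
  then show ?thesis
    by (subst AE_restrict_space_iff[OF S']) (auto simp: v_def elim: AE_mp)
qed

locale separating_square_summable_functionals =
  fixes M :: "'a measure" and I :: "'i set" and \<phi> :: "'i \<Rightarrow> ('a \<Rightarrow> real) \<Rightarrow> real" and C :: real
  assumes functional_linear: "\<And>i f h a b. i \<in> I \<Longrightarrow> integrable M f \<Longrightarrow> integrable M h \<Longrightarrow>
      \<phi> i (\<lambda>x. a * f x + b * h x) = a * \<phi> i f + b * \<phi> i h"
    and sum_squares_le: "\<And>S f. finite S \<Longrightarrow> S \<subseteq> I \<Longrightarrow> integrable M f \<Longrightarrow>
      (\<Sum>i\<in>S. (\<phi> i f)\<^sup>2) \<le> C * (LINT x|M. \<bar>f x\<bar>)\<^sup>2"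
    and functionals_separate: "\<And>f. integrable M f \<Longrightarrow> (\<And>i. i \<in> I \<Longrightarrow> \<phi> i f = 0) \<Longrightarrow>
      AE x in M. f x = 0"
begin

abbreviation L1 :: "('a \<Rightarrow> real) \<Rightarrow> real" where
  "L1 f \<equiv> LINT x|M. \<bar>f x\<bar>"

definition sq_sum :: "('a \<Rightarrow> real) \<Rightarrow> real" where
  "sq_sum f = (\<Sum>\<^sub>\<infinity>i\<in>I. (\<phi> i f)\<^sup>2)"

definition renorm :: "('a \<Rightarrow> real) \<Rightarrow> real" where
  "renorm f = sqrt ((L1 f)\<^sup>2 + sq_sum f)"

lemma L1_add_le:
  assumes "integrable M f" "integrable M h"
  shows "L1 (\<lambda>x. f x + h x) \<le> L1 f + L1 h"
proof -
  have "L1 (\<lambda>x. f x + h x) \<le> (LINT x|M. \<bar>f x\<bar> + \<bar>h x\<bar>)"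
    using assms by (intro integral_mono) auto
  then show ?thesis using assms by simp
qed

lemma L1_scale: "L1 (\<lambda>x. c * f x) = \<bar>c\<bar> * L1 f"
  by (simp add: abs_mult)

lemma functional_add:
  "i \<in> I \<Longrightarrow> integrable M f \<Longrightarrow> integrable M h \<Longrightarrow> \<phi> i (\<lambda>x. f x + h x) = \<phi> i f + \<phi> i h"
  using functional_linear[of i f h 1 1] by simp

lemma functional_scale: "i \<in> I \<Longrightarrow> integrable M f \<Longrightarrow> \<phi> i (\<lambda>x. c * f x) = c * \<phi> i f"
  using functional_linear[of i f f c 0] by simp

lemma summable_sq: "integrable M f \<Longrightarrow> (\<lambda>i. (\<phi> i f)\<^sup>2) summable_on I"
  using sum_squares_le by (intro nonneg_bdd_above_summable_on) (auto simp: bdd_above_def)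

lemma sq_sum_nonneg: "0 \<le> sq_sum f"
  unfolding sq_sum_def by (intro infsum_nonneg) simp

lemma sq_sum_le: "integrable M f \<Longrightarrow> sq_sum f \<le> C * (L1 f)\<^sup>2"
  unfolding sq_sum_def using summable_sq sum_squares_le by (intro infsum_le_finite_sums) auto

lemma sq_sum_scale: "integrable M f \<Longrightarrow> sq_sum (\<lambda>x. c * f x) = c\<^sup>2 * sq_sum f"
  unfolding sq_sum_def
  by (subst infsum_cmult_right'[symmetric], rule infsum_cong) (simp add: functional_scale power_mult_distrib)

lemma sq_sum_add_le:
  assumes f: "integrable M f" and h: "integrable M h"
  shows "sq_sum (\<lambda>x. f x + h x) \<le> (sqrt (sq_sum f) + sqrt (sq_sum h))\<^sup>2"
  unfolding sq_sum_def[of "\<lambda>x. f x + h x"]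
proof (rule infsum_le_finite_sums)
  show "(\<lambda>i. (\<phi> i (\<lambda>x. f x + h x))\<^sup>2) summable_on I" using f h by (intro summable_sq) auto
  fix S assume S: "finite S" "S \<subseteq> I"
  have L2_le: "L2_set (\<lambda>i. \<phi> i g) S \<le> sqrt (sq_sum g)" if "integrable M g" for g
    unfolding L2_set_def sq_sum_def
    using S summable_sq[OF that] by (intro real_sqrt_le_mono finite_sum_le_infsum) auto
  have "(\<Sum>i\<in>S. (\<phi> i (\<lambda>x. f x + h x))\<^sup>2) = (\<Sum>i\<in>S. (\<phi> i f + \<phi> i h)\<^sup>2)"
    using S f h by (intro sum.cong) (auto simp: functional_add)
  also have "\<dots> = (L2_set (\<lambda>i. \<phi> i f + \<phi> i h) S)\<^sup>2"
    by (simp add: L2_set_def sum_nonneg)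
  also have "\<dots> \<le> (L2_set (\<lambda>i. \<phi> i f) S + L2_set (\<lambda>i. \<phi> i h) S)\<^sup>2"
    by (intro power_mono L2_set_triangle_ineq L2_set_nonneg)
  also have "\<dots> \<le> (sqrt (sq_sum f) + sqrt (sq_sum h))\<^sup>2"
    using f h by (intro power_mono add_mono L2_le add_nonneg_nonneg L2_set_nonneg)
  finally show "(\<Sum>i\<in>S. (\<phi> i (\<lambda>x. f x + h x))\<^sup>2) \<le> (sqrt (sq_sum f) + sqrt (sq_sum h))\<^sup>2" .
qed

lemma sq_sum_parallelogram:
  assumes f: "integrable M f" and h: "integrable M h"
  shows "sq_sum (\<lambda>x. (f x + h x) / 2) + sq_sum (\<lambda>x. (f x - h x) / 2) = (sq_sum f + sq_sum h) / 2"
proof -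
  have "(\<phi> i (\<lambda>x. (f x + h x) / 2))\<^sup>2 + (\<phi> i (\<lambda>x. (f x - h x) / 2))\<^sup>2
      = ((\<phi> i f)\<^sup>2 + (\<phi> i h)\<^sup>2) / 2"
    if i: "i \<in> I" for i
  proof -
    have mid: "\<phi> i (\<lambda>x. (f x + h x) / 2) = (\<phi> i f + \<phi> i h) / 2"
      using functional_linear[OF i f h, of "1/2" "1/2"] by (simp add: add_divide_distrib)
    have dif: "\<phi> i (\<lambda>x. (f x - h x) / 2) = (\<phi> i f - \<phi> i h) / 2"
      using functional_linear[OF i f h, of "1/2" "-1/2"] by (simp add: diff_divide_distrib)
    show ?thesis unfolding mid dif by (simp add: power2_eq_square field_simps)
  qed
  then have "sq_sum (\<lambda>x. (f x + h x) / 2) + sq_sum (\<lambda>x. (f x - h x) / 2)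
      = (\<Sum>\<^sub>\<infinity>i\<in>I. 1/2 * ((\<phi> i f)\<^sup>2 + (\<phi> i h)\<^sup>2))"
    unfolding sq_sum_def using f h
    by (subst infsum_add[symmetric]) (auto intro!: summable_sq infsum_cong)
  also have "\<dots> = (sq_sum f + sq_sum h) / 2"
    unfolding sq_sum_def infsum_cmult_right' using f h by (simp add: infsum_add summable_sq)
  finally show ?thesis .
qed

lemma AE_zero_if_sq_sum_zero:
  assumes f: "integrable M f" and "sq_sum f = 0"
  shows "AE x in M. f x = 0"
proof (rule functionals_separate[OF f])
  fix i assume "i \<in> I"
  then have "(\<phi> i f)\<^sup>2 = 0"
    using assms summable_sq[OF f] unfolding sq_sum_def by (intro nonneg_infsum_le_0D[of _ I]) auto
  then show "\<phi> i f = 0" by simp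
qed

lemma renorm_add_le:
  assumes f: "integrable M f" and h: "integrable M h"
  shows "renorm (\<lambda>x. f x + h x) \<le> renorm f + renorm h"
proof -
  have "renorm (\<lambda>x. f x + h x) \<le> sqrt ((L1 f + L1 h)\<^sup>2 + (sqrt (sq_sum f) + sqrt (sq_sum h))\<^sup>2)"
    unfolding renorm_def
  proof (intro real_sqrt_le_mono add_mono)
    show "(L1 (\<lambda>x. f x + h x))\<^sup>2 \<le> (L1 f + L1 h)\<^sup>2"
      using L1_add_le[OF f h] by (intro power_mono) auto
  qed (rule sq_sum_add_le[OF f h])
  also have "\<dots> \<le> renorm f + renorm h"
    unfolding renorm_def
    using real_sqrt_sum_squares_triangle_ineq[of "L1 f" "L1 h" "sqrt (sq_sum f)" "sqrt (sq_sum h)"]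
    by (simp add: sq_sum_nonneg)
  finally show ?thesis .
qed

lemma renorm_scale: "integrable M f \<Longrightarrow> renorm (\<lambda>x. c * f x) = \<bar>c\<bar> * renorm f"
  unfolding renorm_def L1_scale sq_sum_scale
  by (simp add: power_mult_distrib real_sqrt_mult flip: distrib_left)

lemma L1_le_renorm: "L1 f \<le> renorm f"
  unfolding renorm_def using sq_sum_nonneg by (intro real_le_rsqrt) simp

lemma renorm_le:
  assumes f: "integrable M f"
  shows "renorm f \<le> sqrt (1 + C) * L1 f"
proof -
  have "renorm f \<le> sqrt ((1 + C) * (L1 f)\<^sup>2)"
    unfolding renorm_def using sq_sum_le[OF f] by (intro real_sqrt_le_mono) (simp add: algebra_simps)
  also have "\<dots> = sqrt (1 + C) * L1 f"
    by (simp add: real_sqrt_mult)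
  finally show ?thesis .
qed

lemma renorm_strictly_convex:
  assumes f: "integrable M f" and h: "integrable M h"
    and ne: "\<not> (AE x in M. f x = h x)" and eq: "renorm f = renorm h"
  shows "renorm (\<lambda>x. (f x + h x) / 2) < renorm f"
proof -
  let ?m = "\<lambda>x. (f x + h x) / 2"
  have "0 < sq_sum (\<lambda>x. (f x - h x) / 2)"
  proof (rule ccontr)
    assume "\<not> ?thesis"
    then have "AE x in M. (f x - h x) / 2 = 0"
      using f h sq_sum_nonneg by (intro AE_zero_if_sq_sum_zero) (auto simp: order.antisym)
    then show False using ne by (auto elim: AE_mp)
  qed
  then have sq_mid: "sq_sum ?m < (sq_sum f + sq_sum h) / 2"
    using sq_sum_parallelogram[OF f h] by linarith
  have "L1 ?m \<le> (L1 f + L1 h) / 2"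
    using L1_add_le[OF f h] by simp
  then have "(L1 ?m)\<^sup>2 \<le> ((L1 f + L1 h) / 2)\<^sup>2"
    by (intro power_mono) simp_all
  also have "\<dots> \<le> ((L1 f)\<^sup>2 + (L1 h)\<^sup>2) / 2"
    using zero_le_power2[of "L1 f - L1 h"] by (simp add: power2_eq_square field_simps)
  finally have L1_mid: "(L1 ?m)\<^sup>2 \<le> ((L1 f)\<^sup>2 + (L1 h)\<^sup>2) / 2" .
  have "(L1 f)\<^sup>2 + sq_sum f = (L1 h)\<^sup>2 + sq_sum h"
    using eq unfolding renorm_def by simp
  then have "(L1 ?m)\<^sup>2 + sq_sum ?m < (L1 f)\<^sup>2 + sq_sum f"
    using sq_mid L1_mid by argo
  then show ?thesis
    unfolding renorm_def by (rule real_sqrt_less_mono)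
qed

lemma renorm_invariant:
  assumes p: "bij_betw p I I" and L1_U: "L1 (U f) = L1 f"
    and \<phi>_U: "\<And>i. i \<in> I \<Longrightarrow> \<phi> i (U f) = \<phi> (p i) f"
  shows "renorm (U f) = renorm f"
proof -
  have "sq_sum (U f) = (\<Sum>\<^sub>\<infinity>i\<in>I. (\<phi> (p i) f)\<^sup>2)"
    unfolding sq_sum_def using \<phi>_U by (intro infsum_cong) simp
  also have "\<dots> = sq_sum f"
    unfolding sq_sum_def by (rule infsum_reindex_bij_betw[OF p])
  finally show ?thesis unfolding renorm_def L1_U by simp
qed

end

lemma (in finite_measure)
  fixes F :: "'a \<Rightarrow> real"
  assumes T: "T \<in> M \<rightarrow>\<^sub>M M" and ac: "absolutely_continuous M (distr M M T)"
    and F: "F \<in> borel_measurable M"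
  shows integrable_RN_deriv_distr_iff:
      "integrable M (\<lambda>x. enn2real (RN_deriv M (distr M M T) x) * F x) \<longleftrightarrow> integrable M (\<lambda>x. F (T x))"
    and integral_RN_deriv_distr:
      "(LINT x|M. enn2real (RN_deriv M (distr M M T) x) * F x) = (LINT x|M. F (T x))"
proof -
  have fin: "sigma_finite_measure (distr M M T)"
    using finite_measure_distr[OF T] by (simp add: finite_measure_def)
  note RN = RN_deriv_integrable[OF fin ac _ F] RN_deriv_integral[OF fin ac _ F]
  show "integrable M (\<lambda>x. enn2real (RN_deriv M (distr M M T) x) * F x) \<longleftrightarrow> integrable M (\<lambda>x. F (T x))"
    using RN T F by (simp add: integrable_distr_eq)
  show "(LINT x|M. enn2real (RN_deriv M (distr M M T) x) * F x) = (LINT x|M. F (T x))"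
    using RN T F by (simp add: integral_distr)
qed

locale mcp_group_action = group G for G :: "('g, 'b) monoid_scheme" (structure) +
  fixes T :: "'g \<Rightarrow> real \<Rightarrow> real"
  assumes mcp_action: "mcp_action G T"
begin

lemma action_closed: "g \<in> carrier G \<Longrightarrow> x \<in> {0..1} \<Longrightarrow> T g x \<in> {0..1}"
  using mcp_action unfolding mcp_action_def bij_betw_def by blast

lemma action_measurable: "g \<in> carrier G \<Longrightarrow> T g \<in> lam01 \<rightarrow>\<^sub>M lam01"
  using mcp_action unfolding mcp_action_def by blast

lemma action_null_iff:
  "g \<in> carrier G \<Longrightarrow> B \<in> sets lam01 \<Longrightarrow> emeasure lam01 (T g ` B) = 0 \<longleftrightarrow> emeasure lam01 B = 0"
  using mcp_action unfolding mcp_action_def by blast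

lemma action_one: "x \<in> {0..1} \<Longrightarrow> T \<one> x = x"
  using mcp_action unfolding mcp_action_def by blast

lemma action_mult:
  "g \<in> carrier G \<Longrightarrow> h \<in> carrier G \<Longrightarrow> x \<in> {0..1} \<Longrightarrow> T (g \<otimes> h) x = T g (T h x)"
  using mcp_action unfolding mcp_action_def by blast

lemma action_inv_cancel: "g \<in> carrier G \<Longrightarrow> x \<in> {0..1} \<Longrightarrow> T (inv g) (T g x) = x"
  by (metis action_mult action_one inv_closed l_inv)

lemma action_cancel_inv: "g \<in> carrier G \<Longrightarrow> x \<in> {0..1} \<Longrightarrow> T g (T (inv g) x) = x"
  by (metis action_mult action_one inv_closed r_inv)

lemma image_action_eq_vimage:
  assumes g: "g \<in> carrier G" and B: "B \<subseteq> {0..1}"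
  shows "T g ` B = T (inv g) -` B \<inter> {0..1}"
proof (intro equalityI subsetI)
  fix y assume "y \<in> T g ` B"
  then obtain x where "x \<in> B" "y = T g x" by blast
  then show "y \<in> T (inv g) -` B \<inter> {0..1}"
    using B g action_closed action_inv_cancel by auto
next
  fix y assume y: "y \<in> T (inv g) -` B \<inter> {0..1}"
  then have "y = T g (T (inv g) y)" using g action_cancel_inv by simp
  then show "y \<in> T g ` B" using y by blast
qed

lemma image_action_sets: "g \<in> carrier G \<Longrightarrow> B \<in> sets lam01 \<Longrightarrow> T g ` B \<in> sets lam01"
  using measurable_sets[OF action_measurable[of "inv g"], of B]
  by (simp add: image_action_eq_vimage sets_lam01)

lemma absolutely_continuous_distr_action:
  assumes g: "g \<in> carrier G"
  shows "absolutely_continuous lam01 (distr lam01 lam01 (T g))"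
  unfolding absolutely_continuous_def
proof
  fix B assume "B \<in> null_sets lam01"
  then have B: "B \<in> sets lam01" "emeasure lam01 B = 0" by auto
  have "emeasure (distr lam01 lam01 (T g)) B = emeasure lam01 (T (inv g) ` B)"
    using action_measurable[OF g] B g by (simp add: emeasure_distr image_action_eq_vimage sets_lam01)
  also have "\<dots> = 0" using action_null_iff[of "inv g" B] g B by simp
  finally show "B \<in> null_sets (distr lam01 lam01 (T g))" using B by (simp add: null_sets_def)
qed

lemma
  assumes g: "g \<in> carrier G" and F: "F \<in> borel_measurable lam01"
  shows integrable_induced_op_iff: "integrable lam01 (induced_op G T g F) \<longleftrightarrow> integrable lam01 F"
    and integral_induced_op: "integral\<^sup>L lam01 (induced_op G T g F) = integral\<^sup>L lam01 F"
proof -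
  have F_inv: "(\<lambda>x. F (T (inv g) x)) \<in> borel_measurable lam01"
    using action_measurable[OF inv_closed[OF g]] F by (rule measurable_compose)
  have induced: "induced_op G T g F
      = (\<lambda>x. enn2real (RN_deriv lam01 (distr lam01 lam01 (T g)) x) * F (T (inv g) x))"
    by (simp add: induced_op_def fun_eq_iff)
  note T = action_measurable[OF g] absolutely_continuous_distr_action[OF g] F_inv
  have cancel: "x \<in> space lam01 \<Longrightarrow> F (T (inv g) (T g x)) = F x" for x
    using action_inv_cancel[OF g] by simp
  show "integrable lam01 (induced_op G T g F) \<longleftrightarrow> integrable lam01 F"
    unfolding induced lam01.integrable_RN_deriv_distr_iff[OF T]
    by (rule Bochner_Integration.integrable_cong) (simp_all add: cancel)
  show "integral\<^sup>L lam01 (induced_op G T g F) = integral\<^sup>L lam01 F"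
    unfolding induced lam01.integral_RN_deriv_distr[OF T]
    by (rule Bochner_Integration.integral_cong) (simp_all add: cancel)
qed

lemma abs_induced_op: "\<bar>induced_op G T g f x\<bar> = induced_op G T g (\<lambda>y. \<bar>f y\<bar>) x"
  by (simp add: induced_op_def abs_mult)

lemma L1norm_induced_op:
  assumes g: "g \<in> carrier G" and f: "f \<in> borel_measurable lam01"
  shows "L1norm (induced_op G T g f) = L1norm f"
  unfolding L1norm_def abs_induced_op using g f by (intro integral_induced_op) auto

lemma integral_indicator_action_induced_op:
  assumes k: "k \<in> carrier G" and h: "h \<in> carrier G" and B: "B \<in> sets lam01"
    and f: "f \<in> borel_measurable lam01"
  shows "(LINT x|lam01. indicator B (T k x) * induced_op G T h f x)
       = (LINT y|lam01. indicator B (T (k \<otimes> h) y) * f y)"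
proof -
  have "T (k \<otimes> h) (T (inv h) x) = T k x" if "x \<in> {0..1}" for x
    using that k h action_closed[of "inv h" x] by (simp add: action_mult action_cancel_inv)
  then have "(LINT x|lam01. indicator B (T k x) * induced_op G T h f x)
      = integral\<^sup>L lam01 (induced_op G T h (\<lambda>y. indicator B (T (k \<otimes> h) y) * f y))"
    by (intro Bochner_Integration.integral_cong) (simp_all add: induced_op_def)
  also have "\<dots> = (LINT y|lam01. indicator B (T (k \<otimes> h) y) * f y)"
    using k h B f action_measurable[of "k \<otimes> h"]
    by (intro integral_induced_op) (auto intro!: borel_measurable_times measurable_compose[OF _ borel_measurable_indicator])
  finally show ?thesis .
qed

lemma integral_indicator_induced_op:
  assumes h: "h \<in> carrier G" and B: "B \<in> sets lam01" and f: "f \<in> borel_measurable lam01"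
  shows "(LINT x|lam01. indicator B x * induced_op G T h f x) = (LINT y|lam01. indicator B (T h y) * f y)"
proof -
  have "(LINT x|lam01. indicator B x * induced_op G T h f x)
      = (LINT x|lam01. indicator B (T \<one> x) * induced_op G T h f x)"
    by (intro Bochner_Integration.integral_cong) (simp_all add: action_one)
  then show ?thesis
    using integral_indicator_action_induced_op[OF one_closed h B f] h by simp
qed

lemma integrable_indicator_action_mult:
  fixes f :: "real \<Rightarrow> real"
  assumes k: "k \<in> carrier G" and B: "B \<in> sets lam01" and f: "integrable lam01 f"
  shows "integrable lam01 (\<lambda>y. indicator B (T k y) * f y)"
proof (rule Bochner_Integration.integrable_bound[OF f])
  show "(\<lambda>y. indicator B (T k y) * f y) \<in> borel_measurable lam01"
    using measurable_compose[OF action_measurable[OF k] borel_measurable_indicator[OF B]] f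
    by (intro borel_measurable_times) auto
qed (auto simp: indicator_def)

lemma AE_zero_on_preimage_if_integrals_zero:
  fixes f :: "real \<Rightarrow> real"
  assumes k: "k \<in> carrier G" and B: "B \<in> sets lam01" and f: "integrable lam01 f"
    and zero: "\<And>q. q \<in> \<rat> \<Longrightarrow> (LINT y|lam01. indicator (B \<inter> {..q}) (T k y) * f y) = 0"
  shows "AE y in lam01. T k y \<in> B \<longrightarrow> f y = 0"
proof -
  \<comment> \<open>alpha(k) turns the integrals over the preimages under T k into integrals over half-lines.\<close>
  define u where "u x = indicator B x * induced_op G T k f x" for x
  have Bq: "B \<inter> {..q} \<in> sets lam01" for q
    using B by (auto simp: sets_lam01)
  have "integrable lam01 (induced_op G T k f)"
    using integrable_induced_op_iff[OF k] f by auto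
  from integrable_mult_indicator[OF B this] have u: "integrable lam01 u"
    unfolding u_def by simp
  have "AE x in lam01. u x = 0"
    unfolding lam01_def
  proof (rule AE_zero_if_integral_atMost_Rats)
    show "integrable (lebesgue_on {0..1}) u" using u by (simp add: lam01_def)
    fix q :: real assume q: "q \<in> \<rat>"
    have "(LINT x|lebesgue_on {0..1}. indicator {..q} x * u x)
        = (LINT x|lam01. indicator (B \<inter> {..q}) x * induced_op G T k f x)"
      unfolding u_def lam01_def by (simp add: indicator_inter_arith mult_ac)
    also have "\<dots> = 0"
      using integral_indicator_induced_op[OF k Bq] f zero[OF q] by simp
    finally show "(LINT x|lebesgue_on {0..1}. indicator {..q} x * u x) = 0" .
  qed simp
  then have "(LINT x|lam01. \<bar>u x\<bar>) = 0"
    by (simp add: integral_eq_zero_AE)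
  moreover have "(LINT x|lam01. \<bar>u x\<bar>) = (LINT y|lam01. indicator B (T k y) * \<bar>f y\<bar>)"
    unfolding u_def abs_mult abs_induced_op using integral_indicator_induced_op[OF k B] f by simp
  ultimately have "AE y in lam01. indicator B (T k y) * \<bar>f y\<bar> = 0"
    using integral_nonneg_eq_0_iff_AE[OF integrable_indicator_action_mult[OF k B integrable_abs[OF f]]]
    by simp
  then show ?thesis
    by eventually_elim (simp add: indicator_def)
qed

end

locale action_with_fundamental_domain = mcp_group_action +
  fixes A :: "real set"
  assumes countable_group: "countable (carrier G)"
    and fundamental_domain: "fundamental_domain G T A"
begin

lemma domain_sets: "A \<in> sets lam01"
  using fundamental_domain unfolding fundamental_domain_def by blast

lemma AE_translates_disjoint:
  assumes k: "k \<in> carrier G" and k': "k' \<in> carrier G" and "k \<noteq> k'"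
  shows "AE y in lam01. \<not> (T k y \<in> A \<and> T k' y \<in> A)"
proof -
  let ?N = "T (inv k) ` A \<inter> T (inv k') ` A"
  have "inv k \<noteq> inv k'" using assms by (metis inv_inv)
  then have "?N \<in> null_sets lam01"
    using fundamental_domain k k' image_action_sets[of "inv k" A] image_action_sets[of "inv k'" A] domain_sets
    unfolding fundamental_domain_def by auto
  moreover have "T (inv g) ` A = T g -` A \<inter> {0..1}" if "g \<in> carrier G" for g
    using image_action_eq_vimage[of "inv g" A] domain_sets that by (simp add: sets_lam01)
  ultimately have "T k -` A \<inter> {0..1} \<inter> (T k' -` A \<inter> {0..1}) \<in> null_sets lam01"
    using k k' by simp
  from AE_not_in[OF this] show ?thesis
    by (rule AE_mp[OF _ AE_I2]) auto
qed

lemma AE_translates_cover: "AE y in lam01. \<exists>k\<in>carrier G. T k y \<in> A"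
proof -
  let ?U = "\<Union>g\<in>carrier G. T g ` A"
  have "?U \<in> sets lam01"
    using countable_group image_action_sets domain_sets by (intro sets.countable_UN'') auto
  then have "({0..1} - ?U) \<union> (?U - {0..1}) \<in> null_sets lam01"
    using fundamental_domain unfolding fundamental_domain_def
    by (auto intro!: sets.Un sets.Diff simp flip: space_lam01)
  then have "AE y in lam01. y \<in> ?U"
    by (rule AE_mp[OF AE_not_in AE_I2]) auto
  then show ?thesis
  proof eventually_elim
    case (elim y)
    then obtain g a where "g \<in> carrier G" "a \<in> A" "y = T g a" by blast
    moreover have "a \<in> {0..1}" using \<open>a \<in> A\<close> domain_sets by (auto simp: sets_lam01)
    ultimately show ?case using action_inv_cancel by (intro bexI[of _ "inv g"]) auto
  qed
qed

lemma sum_integral_translates_le: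
  fixes f :: "real \<Rightarrow> real"
  assumes F: "finite F" "F \<subseteq> carrier G" and f: "integrable lam01 f"
  shows "(\<Sum>k\<in>F. LINT y|lam01. indicator A (T k y) * \<bar>f y\<bar>) \<le> L1norm f"
proof -
  have int: "integrable lam01 (\<lambda>y. indicator A (T k y) * \<bar>f y\<bar>)" if "k \<in> F" for k
    using that F f domain_sets by (intro integrable_indicator_action_mult) auto
  have "AE y in lam01. \<forall>k\<in>F. \<forall>k'\<in>F. k \<noteq> k' \<longrightarrow> \<not> (T k y \<in> A \<and> T k' y \<in> A)"
    using F AE_translates_disjoint by (simp add: AE_ball_countable countable_finite subset_iff)
  then have "AE y in lam01. (\<Sum>k\<in>F. indicator A (T k y) * \<bar>f y\<bar>) \<le> \<bar>f y\<bar>"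
  proof eventually_elim
    case (elim y)
    have "(\<Sum>k\<in>F. indicator A (T k y) :: real) = real (card (F \<inter> {k. T k y \<in> A}))"
      using F(1) by (simp add: indicator_def sum.inter_filter[symmetric])
    also have "\<dots> \<le> 1"
    proof -
      have "card (F \<inter> {k. T k y \<in> A}) \<le> Suc 0"
        using F(1) elim by (subst card_le_Suc0_iff_eq) auto
      then show ?thesis by simp
    qed
    finally show ?case
      using mult_right_mono[of _ 1 "\<bar>f y\<bar>"] by (simp add: sum_distrib_right[symmetric])
  qed
  then have "(LINT y|lam01. (\<Sum>k\<in>F. indicator A (T k y) * \<bar>f y\<bar>)) \<le> L1norm f"
    unfolding L1norm_def using int f by (intro integral_mono_AE) auto
  then show ?thesis
    using int by (simp add: Bochner_Integration.integral_sum)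
qed

\<comment> \<open>from_nat_into enumerates the rationals; the weight (1/sqrt 2)^n makes the squares summable in n.\<close>
definition domain_functional where
  "domain_functional = (\<lambda>(k, n) f.
     (1 / sqrt 2) ^ n * (LINT y|lam01. indicator (A \<inter> {..from_nat_into \<rat> n}) (T k y) * f y))"

lemma domain_Int_atMost_sets: "A \<inter> {..q} \<in> sets lam01"
  using domain_sets by (auto simp: sets_lam01)

lemma domain_functional_linear:
  assumes i: "i \<in> carrier G \<times> UNIV" and f: "integrable lam01 f" and h: "integrable lam01 h"
  shows "domain_functional i (\<lambda>x. a * f x + b * h x) = a * domain_functional i f + b * domain_functional i h"
proof -
  obtain k n where kn: "i = (k, n)" and k: "k \<in> carrier G" using i by auto
  let ?B = "A \<inter> {..from_nat_into \<rat> n}"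
  have "integrable lam01 (\<lambda>y. indicator ?B (T k y) * f y)" "integrable lam01 (\<lambda>y. indicator ?B (T k y) * h y)"
    using k f h domain_Int_atMost_sets by (auto intro: integrable_indicator_action_mult)
  then have "(LINT y|lam01. indicator ?B (T k y) * (a * f y + b * h y))
      = a * (LINT y|lam01. indicator ?B (T k y) * f y) + b * (LINT y|lam01. indicator ?B (T k y) * h y)"
    by (subst Bochner_Integration.integral_cong[OF refl, where
          g="\<lambda>y. a * (indicator ?B (T k y) * f y) + b * (indicator ?B (T k y) * h y)"])
      (simp_all add: algebra_simps)
  then show ?thesis
    unfolding kn domain_functional_def prod.case by (simp add: algebra_simps)
qed

lemma domain_functional_sq_le:
  fixes f :: "real \<Rightarrow> real"
  assumes k: "k \<in> carrier G" and f: "integrable lam01 f"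
  shows "(domain_functional (k, n) f)\<^sup>2 \<le> (1/2) ^ n * (L1norm f * (LINT y|lam01. indicator A (T k y) * \<bar>f y\<bar>))"
proof -
  let ?c = "LINT y|lam01. indicator A (T k y) * \<bar>f y\<bar>"
  let ?L = "LINT y|lam01. indicator (A \<inter> {..from_nat_into \<rat> n}) (T k y) * f y"
  have "\<bar>?L\<bar> \<le> ?c"
    using integrable_indicator_action_mult[OF k domain_Int_atMost_sets f]
      integrable_indicator_action_mult[OF k domain_sets integrable_abs[OF f]]
    by (intro integral_abs_bound_integral) (auto simp: indicator_def abs_mult)
  moreover have "?c \<le> L1norm f"
    unfolding L1norm_def using integrable_indicator_action_mult[OF k domain_sets integrable_abs[OF f]] f
    by (intro integral_mono) (auto simp: indicator_def)
  moreover have "0 \<le> ?c"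
    by (simp add: integral_nonneg_AE)
  ultimately have "\<bar>?L\<bar> * \<bar>?L\<bar> \<le> L1norm f * ?c"
    by (intro mult_mono) auto
  then have "?L\<^sup>2 \<le> L1norm f * ?c"
    by (simp add: power2_eq_square)
  moreover have "((1 / sqrt 2) ^ n)\<^sup>2 = (1/2 :: real) ^ n"
  proof -
    have "((1 / sqrt 2) ^ n)\<^sup>2 = ((1 / sqrt 2)\<^sup>2) ^ n"
      by (simp only: power_mult[symmetric] mult.commute)
    then show ?thesis by (simp add: power_divide)
  qed
  ultimately show ?thesis
    unfolding domain_functional_def prod.case power_mult_distrib by (simp add: mult_left_mono)
qed

lemma sum_sq_domain_functional_le:
  fixes f :: "real \<Rightarrow> real"
  assumes S: "finite S" "S \<subseteq> carrier G \<times> UNIV" and f: "integrable lam01 f"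
  shows "(\<Sum>i\<in>S. (domain_functional i f)\<^sup>2) \<le> 2 * (L1norm f)\<^sup>2"
proof -
  define c where "c k = (LINT y|lam01. indicator A (T k y) * \<bar>f y\<bar>)" for k
  let ?K = "fst ` S" and ?N = "snd ` S"
  have K: "finite ?K" "?K \<subseteq> carrier G" and N: "finite ?N" using S by auto
  have c_nonneg: "0 \<le> L1norm f * c k" for k
    unfolding c_def L1norm_def by (simp add: integral_nonneg_AE)
  have geometric: "(\<Sum>n\<in>?N. (1/2 :: real) ^ n) \<le> 2"
    using sum_le_suminf[of "\<lambda>n. (1/2 :: real) ^ n" ?N] N suminf_geometric[of "1/2 :: real"] by simp
  have "(\<Sum>i\<in>S. (domain_functional i f)\<^sup>2) \<le> (\<Sum>i\<in>?K \<times> ?N. (domain_functional i f)\<^sup>2)"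
    using K N by (intro sum_mono2) (auto intro: rev_image_eqI)
  also have "\<dots> = (\<Sum>k\<in>?K. \<Sum>n\<in>?N. (domain_functional (k, n) f)\<^sup>2)"
    by (simp add: sum.cartesian_product split_def)
  also have "\<dots> \<le> (\<Sum>k\<in>?K. \<Sum>n\<in>?N. (1/2) ^ n * (L1norm f * c k))"
    unfolding c_def using K f by (intro sum_mono domain_functional_sq_le) auto
  also have "\<dots> = (\<Sum>k\<in>?K. (\<Sum>n\<in>?N. (1/2) ^ n) * (L1norm f * c k))"
    by (simp add: sum_distrib_right)
  also have "\<dots> \<le> (\<Sum>k\<in>?K. 2 * (L1norm f * c k))"
    using geometric c_nonneg by (intro sum_mono mult_right_mono)
  also have "\<dots> = 2 * L1norm f * (\<Sum>k\<in>?K. c k)"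
    by (simp add: sum_distrib_left mult_ac)
  also have "\<dots> \<le> 2 * L1norm f * L1norm f"
    unfolding c_def using sum_integral_translates_le[OF K f]
    by (intro mult_left_mono) (simp_all add: L1norm_def)
  finally show ?thesis by (simp add: power2_eq_square mult_ac)
qed

lemma domain_functionals_separate:
  fixes f :: "real \<Rightarrow> real"
  assumes f: "integrable lam01 f" and zero: "\<And>i. i \<in> carrier G \<times> UNIV \<Longrightarrow> domain_functional i f = 0"
  shows "AE y in lam01. f y = 0"
proof -
  have "AE y in lam01. T k y \<in> A \<longrightarrow> f y = 0" if k: "k \<in> carrier G" for k
  proof (rule AE_zero_on_preimage_if_integrals_zero[OF k domain_sets f])
    fix q :: real assume "q \<in> \<rat>"
    then obtain n where "q = from_nat_into \<rat> n"
      by (metis countable_rat from_nat_into_surj)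
    then show "(LINT y|lam01. indicator (A \<inter> {..q}) (T k y) * f y) = 0"
      using zero[of "(k, n)"] k by (simp add: domain_functional_def)
  qed
  then have "AE y in lam01. \<forall>k\<in>carrier G. T k y \<in> A \<longrightarrow> f y = 0"
    using countable_group by (subst AE_ball_countable) auto
  with AE_translates_cover show ?thesis
    by eventually_elim blast
qed

lemma domain_functional_induced_op:
  assumes k: "k \<in> carrier G" and h: "h \<in> carrier G" and f: "f \<in> borel_measurable lam01"
  shows "domain_functional (k, n) (induced_op G T h f) = domain_functional (k \<otimes> h, n) f"
  unfolding domain_functional_def prod.case
  using integral_indicator_action_induced_op[OF k h domain_Int_atMost_sets f] by simp

sublocale separating_square_summable_functionals lam01 "carrier G \<times> UNIV" domain_functional 2
  using domain_functional_linear sum_sq_domain_functional_le domain_functionals_separate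
  by unfold_locales (auto simp: L1norm_def)

lemma renorm_induced_op:
  assumes h: "h \<in> carrier G" and f: "integrable lam01 f"
  shows "renorm (induced_op G T h f) = renorm f"
proof (rule renorm_invariant)
  show "bij_betw (\<lambda>(k, n). (k \<otimes> h, n)) (carrier G \<times> UNIV) (carrier G \<times> UNIV)"
    by (rule bij_betw_byWitness[where f'="\<lambda>(k, n). (k \<otimes> inv h, n)"]) (auto simp: h m_assoc)
  show "L1 (induced_op G T h f) = L1 f"
    using L1norm_induced_op[OF h] f by (simp add: L1norm_def)
  show "domain_functional i (induced_op G T h f) = domain_functional ((\<lambda>(k, n). (k \<otimes> h, n)) i) f"
    if "i \<in> carrier G \<times> UNIV" for i
    using that domain_functional_induced_op[OF _ h] f by auto
qed

end

theorem proposition5p2: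
  fixes G :: "('g, 'b) monoid_scheme" and T :: "'g \<Rightarrow> real \<Rightarrow> real" and A :: "real set"
  assumes "group G" and "countable (carrier G)"
    and "mcp_action G T"
    and "fundamental_domain G T A"
  shows "\<exists>N :: (real \<Rightarrow> real) \<Rightarrow> real.
     \<comment> \<open>N is a norm on L1[0,1] (elements represented by integrable functions)\<close>
     (\<forall>f h. integrable lam01 f \<longrightarrow> integrable lam01 h \<longrightarrow> N (\<lambda>x. f x + h x) \<le> N f + N h) \<and>
     (\<forall>f c. integrable lam01 f \<longrightarrow> N (\<lambda>x. c * f x) = \<bar>c\<bar> * N f) \<and>
     \<comment> \<open>equivalent to the L1 norm\<close>
     (\<exists>c C. 0 < c \<and> 0 < C \<and>
        (\<forall>f. integrable lam01 f \<longrightarrow> c * L1norm f \<le> N f \<and> N f \<le> C * L1norm f)) \<and>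
     \<comment> \<open>G-invariant\<close>
     (\<forall>g\<in>carrier G. \<forall>f. integrable lam01 f \<longrightarrow> N (induced_op G T g f) = N f) \<and>
     \<comment> \<open>strictly convex\<close>
     (\<forall>f h. integrable lam01 f \<longrightarrow> integrable lam01 h \<longrightarrow>
        \<not> (AE x in lam01. f x = h x) \<longrightarrow> N f = N h \<longrightarrow>
        N (\<lambda>x. (f x + h x) / 2) < N f)"
proof -
  interpret action_with_fundamental_domain G T A
    using assms by (intro action_with_fundamental_domain.intro mcp_group_action.intro
        mcp_group_action_axioms.intro action_with_fundamental_domain_axioms.intro)
  show ?thesis
  proof (intro exI[of _ renorm] conjI)
    show "\<forall>f h. integrable lam01 f \<longrightarrow> integrable lam01 h \<longrightarrow>
        renorm (\<lambda>x. f x + h x) \<le> renorm f + renorm h"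
      using renorm_add_le by blast
    show "\<forall>f c. integrable lam01 f \<longrightarrow> renorm (\<lambda>x. c * f x) = \<bar>c\<bar> * renorm f"
      using renorm_scale by blast
    show "\<exists>c C. 0 < c \<and> 0 < C \<and>
        (\<forall>f. integrable lam01 f \<longrightarrow> c * L1norm f \<le> renorm f \<and> renorm f \<le> C * L1norm f)"
      using L1_le_renorm renorm_le by (intro exI[of _ 1] exI[of _ "sqrt 3"]) (simp add: L1norm_def)
    show "\<forall>g\<in>carrier G. \<forall>f. integrable lam01 f \<longrightarrow> renorm (induced_op G T g f) = renorm f"
      using renorm_induced_op by blast
    show "\<forall>f h. integrable lam01 f \<longrightarrow> integrable lam01 h \<longrightarrow> \<not> (AE x in lam01. f x = h x) \<longrightarrow>
        renorm f = renorm h \<longrightarrow> renorm (\<lambda>x. (f x + h x) / 2) < renorm f"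
      using renorm_strictly_convex by blast
  qed
qed

end
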